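(* Let $n$ be even, $k>1$, and let $f=a_1+2a_2+\cdots+2^{k-1}a_k\in\mathcal{GB}_n^{2^k}$ with $a_1,\dots,a_k\in\mathcal{B}_n$ be gbent. Then for every $\mathbf{c}=(c_1,\dots,c_{k-1})\in\mathbb{F}_2^{k-1}$ the Boolean function $g_{\mathbf{c}}=c_1a_1\oplus c_2a_2\oplus\cdots\oplus c_{k-1}a_{k-1}\oplus a_k$ is bent.
   Context: $\mathcal{B}_n$: Boolean functions $\mathbb{F}_2^n\to\mathbb{F}_2$; $\mathcal{GB}_n^q$: functions $\mathbb{F}_2^n\to\mathbb{Z}_q$; every $f\in\mathcal{GB}_n^{2^k}$ is uniquely written as $f=\sum_{i=1}^k 2^{i-1}a_i$ (binary digits, $a_i\in\mathcal{B}_n$). $\mathcal{H}^{(q)}_f(\mathbf{u})=\sum_{\mathbf{x}}\zeta_q^{f(\mathbf{x})}(-1)^{\mathbf{u}\cdot\mathbf{x}}$ with $\zeta_q=e^{2\pi i/q}$; $f$ is gbent if $|\mathcal{H}^{(q)}_f(\mathbf{u})|=2^{n/2}$ for all $\mathbf{u}$. $g\in\mathcal{B}_n$ is bent if $|\sum_{\mathbf{x}}(-1)^{g(\mathbf{x})+\mathbf{u}\cdot\mathbf{x}}|=2^{n/2}$ for all $\mathbf{u}$. *)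

theory Defs
  imports "HOL-Analysis.Analysis"
begin

text \<open>Vectors of F_2^n are boolean lists of length n (True = 1).\<close>

definition vecs :: "nat \<Rightarrow> bool list set" where
  "vecs n = {xs. length xs = n}"

definition dotp :: "bool list \<Rightarrow> bool list \<Rightarrow> bool" where
  "dotp u x = odd (card {i. i < length x \<and> u ! i \<and> x ! i})"

definition sgn2 :: "bool \<Rightarrow> complex" where
  "sgn2 b = (if b then -1 else 1)"

definition zeta :: "nat \<Rightarrow> complex" where
  "zeta q = cis (2 * pi / real q)"

definition gwht :: "nat \<Rightarrow> nat \<Rightarrow> (bool list \<Rightarrow> nat) \<Rightarrow> bool list \<Rightarrow> complex" where
  "gwht n q f u = (\<Sum>x\<in>vecs n. zeta q ^ (f x mod q) * sgn2 (dotp u x))"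

definition gbent :: "nat \<Rightarrow> nat \<Rightarrow> (bool list \<Rightarrow> nat) \<Rightarrow> bool" where
  "gbent n q f \<longleftrightarrow> (\<forall>u\<in>vecs n. cmod (gwht n q f u) = 2 powr (real n / 2))"

definition wht :: "nat \<Rightarrow> (bool list \<Rightarrow> bool) \<Rightarrow> bool list \<Rightarrow> complex" where
  "wht n g u = (\<Sum>x\<in>vecs n. sgn2 (g x \<noteq> dotp u x))"

definition bent :: "nat \<Rightarrow> (bool list \<Rightarrow> bool) \<Rightarrow> bool" where
  "bent n g \<longleftrightarrow> (\<forall>u\<in>vecs n. cmod (wht n g u) = 2 powr (real n / 2))"

definition gfun :: "nat \<Rightarrow> (nat \<Rightarrow> bool list \<Rightarrow> bool) \<Rightarrow> bool list \<Rightarrow> nat" where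
  "gfun k a x = (\<Sum>i=1..k. 2 ^ (i - 1) * (if a i x then 1 else 0))"

definition gc :: "nat \<Rightarrow> (nat \<Rightarrow> bool list \<Rightarrow> bool) \<Rightarrow> (nat \<Rightarrow> bool) \<Rightarrow> bool list \<Rightarrow> bool" where
  "gc k a c x = odd (card ({i. 1 \<le> i \<and> i \<le> k - 1 \<and> c i \<and> a i x} \<union> {i. i = k \<and> a k x}))"

end

(*
  Write f = l + 2^(k-1) a_k with 0 <= l < 2^(k-1) =: m.  Since zeta^m = -1, the gbent transform
  at u is P(zeta) for the integer polynomial P = sum_x (-1)^(a_k(x) + u.x) X^(l(x)) of degree < m,
  and the Walsh transform of g_c at u is sum_j coeff P j * chi_c(j) for a sign character chi_c.
  So it suffices to show that |P(zeta)|^2 = 2^n forces P = +-2^(n/2) X^j for a single j.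

  X^m + 1 is irreducible over the integers, so 1, zeta, ..., zeta^(m-1) is a Z-basis of Z[zeta]
  and every odd power of zeta is a Galois conjugate of zeta.  In Z[zeta] the element 1 - zeta is
  prime, associate to its conjugate, and 2 = (1 - zeta)^m times a unit; hence |P(zeta)|^2 = 2^n
  gives 2^(n/2) | P(zeta), i.e. 2^(n/2) divides every coefficient of P.  Averaging |P|^2 over the
  conjugates gives Parseval's identity sum_j (coeff P j)^2 = 2^n, so exactly one coefficient is
  nonzero.
*)

theory Submission
  imports Defs "HOL-Computational_Algebra.Polynomial_Factorial"
begin

lemma sum_bits_less: "(\<Sum>i<K. 2 ^ i * (if b i then 1 else 0)) < (2::nat) ^ K"
proof (induction K)
  case (Suc K)
  have "(\<Sum>i<Suc K. (2::nat) ^ i * (if b i then 1 else 0))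
      = (\<Sum>i<K. 2 ^ i * (if b i then 1 else 0)) + 2 ^ K * (if b K then 1 else 0)"
    by simp
  also have "\<dots> < 2 ^ K + 2 ^ K" using Suc by (intro add_less_le_mono) auto
  finally show ?case by simp
qed simp

lemma odd_sum_bits_div_pow2_iff:
  "odd ((\<Sum>i<K. 2 ^ i * (if b i then 1 else 0)) div (2::nat) ^ j) \<longleftrightarrow> j < K \<and> b j"
proof (induction K)
  case (Suc K)
  define S where "S = (\<Sum>i<K. 2 ^ i * (if b i then 1 else (0::nat)))"
  define \<beta> where "\<beta> = (if b K then 1 else (0::nat))"
  have S': "(\<Sum>i<Suc K. 2 ^ i * (if b i then 1 else 0)) = S + 2 ^ K * \<beta>"
    unfolding S_def \<beta>_def by simp
  have S_less: "S < 2 ^ K" unfolding S_def by (rule sum_bits_less)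
  consider "j < K" | "j = K" | "K < j" by linarith
  then show ?case
  proof cases
    case 1
    have split: "S + 2 ^ K * \<beta> = S + 2 ^ j * (2 ^ (K - j) * \<beta>)"
      using 1 by (simp add: power_add[symmetric])
    have "(S + 2 ^ K * \<beta>) div 2 ^ j = 2 ^ (K - j) * \<beta> + S div 2 ^ j"
      unfolding split by (rule div_mult_self2) simp
    moreover have "even ((2::nat) ^ (K - j) * \<beta>)" using 1 by simp
    ultimately show ?thesis using Suc.IH 1 unfolding S' S_def by simp
  next
    case 2
    have "(S + 2 ^ K * \<beta>) div 2 ^ K = \<beta>" using S_less by simp
    then show ?thesis unfolding S' using 2 by (simp add: \<beta>_def)
  next
    case 3
    have "S + 2 ^ K * \<beta> < 2 ^ Suc K" using S_less by (simp add: \<beta>_def)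
    also have "\<dots> \<le> 2 ^ j" using 3 by (intro power_increasing) auto
    finally show ?thesis unfolding S' using 3 by simp
  qed
qed simp

lemma even_binomial_pow2:
  assumes "0 < j" "j < 2 ^ r"
  shows "even ((2::nat) ^ r choose j)"
proof (rule ccontr)
  assume "odd (2 ^ r choose j)"
  then have "coprime ((2::nat) ^ r) (2 ^ r choose j)" by simp
  moreover have "j * (2 ^ r choose j) = 2 ^ r * ((2 ^ r - 1) choose (j - 1))"
    using times_binomial_minus1_eq assms(1) by blast
  ultimately have "2 ^ r dvd j" by (metis coprime_dvd_mult_left_iff dvd_triv_left)
  with assms show False by (auto dest: dvd_imp_le)
qed

lemma sum_power2_eq_1_imp_single:
  fixes d :: "'a \<Rightarrow> int"
  assumes "finite S" and "(\<Sum>j\<in>S. d j ^ 2) = 1"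
  shows "\<exists>j0\<in>S. d j0 ^ 2 = 1 \<and> (\<forall>j\<in>S. j \<noteq> j0 \<longrightarrow> d j = 0)"
proof -
  obtain j0 where "j0 \<in> S" "d j0 \<noteq> 0"
    using assms(2) by (metis (mono_tags, lifting) power_zero_numeral sum.neutral zero_neq_one)
  have split: "(\<Sum>j\<in>S. d j ^ 2) = d j0 ^ 2 + (\<Sum>j\<in>S - {j0}. d j ^ 2)"
    using assms(1) \<open>j0 \<in> S\<close> by (simp add: sum.remove)
  have "1 \<le> d j0 ^ 2" using \<open>d j0 \<noteq> 0\<close> by (simp add: int_one_le_iff_zero_less)
  moreover have "0 \<le> (\<Sum>j\<in>S - {j0}. d j ^ 2)" by (simp add: sum_nonneg)
  ultimately have "d j0 ^ 2 = 1" "(\<Sum>j\<in>S - {j0}. d j ^ 2) = 0" using split assms(2) by linarith+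
  then show ?thesis using assms(1) \<open>j0 \<in> S\<close> by (auto simp: sum_nonneg_eq_0_iff)
qed

abbreviation cpoly :: "int poly \<Rightarrow> complex poly" where
  "cpoly \<equiv> map_poly of_int"

lemma cpoly_add [simp]: "cpoly (p + q) = cpoly p + cpoly q"
  by (intro poly_eqI) (simp add: coeff_map_poly)

lemma cpoly_diff [simp]: "cpoly (p - q) = cpoly p - cpoly q"
  by (intro poly_eqI) (simp add: coeff_map_poly)

lemma cpoly_uminus [simp]: "cpoly (- p) = - cpoly p"
  by (intro poly_eqI) (simp add: coeff_map_poly)

lemma cpoly_mult [simp]: "cpoly (p * q) = cpoly p * cpoly q"
  by (intro poly_eqI) (simp add: coeff_map_poly coeff_mult)

lemma cpoly_pCons [simp]: "cpoly (pCons a p) = pCons (of_int a) (cpoly p)"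
  by (simp add: map_poly_pCons)

lemma cpoly_power [simp]: "cpoly (p ^ n) = cpoly p ^ n"
  by (induction n) simp_all

lemma cpoly_smult [simp]: "cpoly (smult c p) = smult (of_int c) (cpoly p)"
  by (intro poly_eqI) (simp add: coeff_map_poly)

lemma cpoly_monom [simp]: "cpoly (monom c n) = monom (of_int c) n"
  by (simp add: map_poly_monom)

lemma cpoly_sum [simp]: "cpoly (sum f A) = (\<Sum>x\<in>A. cpoly (f x))"
  by (induction A rule: infinite_finite_induct) simp_all

lemma poly_cpoly_pcompose: "poly (cpoly (pcompose p q)) z = poly (cpoly p) (poly (cpoly q) z)"
  by (induction p rule: pCons_induct) (simp_all add: pcompose_pCons)

lemma poly_cpoly_cnj: "poly (cpoly p) (cnj z) = cnj (poly (cpoly p) z)"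
proof -
  have "map_poly cnj (cpoly p) = cpoly p" by (intro poly_eqI) (simp add: coeff_map_poly)
  then show ?thesis using poly_cnj[of "cpoly p" z] by simp
qed

lemma poly_cpoly_eq_sum:
  assumes "degree p < M"
  shows "poly (cpoly p) z = (\<Sum>j<M. of_int (coeff p j) * z ^ j)"
proof -
  have "p = (\<Sum>j\<le>M - 1. monom (coeff p j) j)"
    using assms by (intro poly_as_sum_of_monoms'[symmetric]) simp
  also have "{..M - 1} = {..<M}" using assms by auto
  finally have "poly (cpoly p) z = poly (cpoly (\<Sum>j<M. monom (coeff p j) j)) z"
    by (rule arg_cong)
  then show ?thesis by (simp only: cpoly_sum cpoly_monom poly_sum poly_monom)
qed

section \<open>Irreducibility of \<open>X^(2^r) + 1\<close>\<close>

lemma eisenstein_factor_degree_0: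
  fixes A B :: "int poly" and p :: int
  assumes "prime p"
    and coeffs: "\<And>i. 0 < i \<Longrightarrow> i < degree (A * B) \<Longrightarrow> p dvd coeff (A * B) i"
    and lead: "\<not> p dvd lead_coeff (A * B)"
    and "p dvd coeff A 0" and "\<not> p dvd coeff B 0"
  shows "degree B = 0"
proof -
  have "A * B \<noteq> 0" using lead by auto
  then have nonzero: "A \<noteq> 0" "B \<noteq> 0" by auto
  have "\<not> p dvd lead_coeff A" using lead by (auto simp: lead_coeff_mult)
  define i where "i = (LEAST i. \<not> p dvd coeff A i)"
  have i_not_dvd: "\<not> p dvd coeff A i"
    unfolding i_def using \<open>\<not> p dvd lead_coeff A\<close> by (rule LeastI)
  have below_i: "p dvd coeff A j" if "j < i" for j
    using that not_less_Least unfolding i_def by blast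
  have "i \<le> degree A" unfolding i_def using \<open>\<not> p dvd lead_coeff A\<close> by (rule Least_le)
  have "i \<noteq> 0" using i_not_dvd \<open>p dvd coeff A 0\<close> by (metis)
  have "coeff (A * B) i = (\<Sum>j<i. coeff A j * coeff B (i - j)) + coeff A i * coeff B 0"
    by (simp add: coeff_mult lessThan_Suc_atMost[symmetric])
  moreover have "p dvd (\<Sum>j<i. coeff A j * coeff B (i - j))"
    by (intro dvd_sum) (simp add: below_i)
  moreover have "\<not> p dvd coeff A i * coeff B 0"
    using i_not_dvd assms(1,5) by (simp add: prime_dvd_mult_iff)
  ultimately have "\<not> p dvd coeff (A * B) i" by (metis dvd_add_right_iff)
  then have "degree (A * B) \<le> i" using coeffs \<open>i \<noteq> 0\<close> by (meson not_le_imp_less gr0I)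
  with \<open>i \<le> degree A\<close> nonzero show ?thesis by (simp add: degree_mult_eq)
qed

text \<open>\<open>X^(2^r) + 1\<close> is the \<open>2^(r+1)\<close>-th cyclotomic polynomial.\<close>

definition cyclotomic_pow2 :: "nat \<Rightarrow> int poly" where
  "cyclotomic_pow2 r = [:0, 1:] ^ (2 ^ r) + 1"

lemma degree_cyclotomic_pow2: "degree (cyclotomic_pow2 r) = 2 ^ r"
  unfolding cyclotomic_pow2_def
  by (subst degree_add_eq_left) (simp_all add: degree_power_eq)

lemma lead_coeff_cyclotomic_pow2: "lead_coeff (cyclotomic_pow2 r) = 1"
  unfolding degree_cyclotomic_pow2 by (simp add: cyclotomic_pow2_def coeff_linear_poly_power)

lemma cyclotomic_pow2_nonzero: "cyclotomic_pow2 r \<noteq> 0"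
  using lead_coeff_cyclotomic_pow2[of r] by auto

lemma pseudo_divmod_cyclotomic_pow2:
  obtains Q R where "G = cyclotomic_pow2 r * Q + R" and "R = 0 \<or> degree R < 2 ^ r"
proof -
  obtain Q R where QR: "pseudo_divmod G (cyclotomic_pow2 r) = (Q, R)"
    by (cases "pseudo_divmod G (cyclotomic_pow2 r)") auto
  show thesis
    using pseudo_divmod[OF cyclotomic_pow2_nonzero QR]
    by (intro that[of Q R])
      (simp_all add: lead_coeff_cyclotomic_pow2[unfolded degree_cyclotomic_pow2] degree_cyclotomic_pow2)
qed

lemma poly_cyclotomic_pow2_1: "poly (cyclotomic_pow2 r) 1 = 2"
  by (simp add: cyclotomic_pow2_def)

lemma pcompose_power: "pcompose (p ^ n) q = pcompose p q ^ n"
  by (induction n) (simp_all add: pcompose_1 pcompose_mult)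

lemma irreducible_cyclotomic_pow2: "irreducible (cyclotomic_pow2 r)"
proof (rule irreducibleI)
  show "cyclotomic_pow2 r \<noteq> 0" by (rule cyclotomic_pow2_nonzero)
  show "\<not> is_unit (cyclotomic_pow2 r)"
    using degree_cyclotomic_pow2[of r] by (auto simp: is_unit_poly_iff)
next
  fix A B assume AB: "cyclotomic_pow2 r = A * B"
  let ?s = "\<lambda>P. pcompose P [:1, 1:]"
  have H: "?s A * ?s B = [:1, 1:] ^ (2 ^ r) + 1"
    by (simp add: AB[symmetric] cyclotomic_pow2_def pcompose_mult[symmetric] pcompose_add
        pcompose_power pcompose_1 pcompose_pCons)
  have deg_H: "degree (?s A * ?s B) = 2 ^ r"
    unfolding H by (subst degree_add_eq_left) (simp_all add: degree_power_eq)
  have coeff_H: "coeff (?s A * ?s B) i = int (2 ^ r choose i)" if "0 < i" "i \<le> 2 ^ r" for i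
    unfolding H using that by (simp add: coeff_linear_poly_power)
  have even_mid: "2 dvd coeff (?s A * ?s B) i" if "0 < i" "i < degree (?s A * ?s B)" for i
    using that even_binomial_pow2[of i r] coeff_H[of i] unfolding deg_H by simp
  have odd_lead: "\<not> 2 dvd lead_coeff (?s A * ?s B)"
    using coeff_H[of "2 ^ r"] unfolding deg_H by simp
  have const: "poly A 1 * poly B 1 = 2"
    using poly_cyclotomic_pow2_1[of r] by (simp add: AB)
  have "\<not> (even (poly A 1) \<and> even (poly B 1))"
  proof
    assume "even (poly A 1) \<and> even (poly B 1)"
    then have "2 * 2 dvd poly A 1 * poly B 1" by (blast intro: mult_dvd_mono)
    then show False unfolding const by simp
  qed
  moreover have "even (poly A 1) \<or> even (poly B 1)"
    using const by (metis even_mult_iff even_numeral)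
  ultimately consider "even (poly A 1)" "odd (poly B 1)" | "even (poly B 1)" "odd (poly A 1)"
    by blast
  then have "degree (?s A) = 0 \<or> degree (?s B) = 0"
    using eisenstein_factor_degree_0[of 2 "?s A" "?s B"] eisenstein_factor_degree_0[of 2 "?s B" "?s A"]
      even_mid odd_lead by (cases; simp add: mult.commute pcompose_coeff_0)
  then have "degree A = 0 \<or> degree B = 0" by (simp add: degree_pcompose)
  moreover have "lead_coeff A * lead_coeff B = 1"
    using lead_coeff_cyclotomic_pow2[of r] by (simp add: AB lead_coeff_mult)
  ultimately show "is_unit A \<or> is_unit B"
    by (auto elim!: degree_eq_zeroE simp: is_unit_const_poly_iff zmult_eq_1_iff)
qed

section \<open>The primitive \<open>2^(r+1)\<close>-th root of unity\<close>

locale pow2_root_of_unity =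
  fixes r :: nat
  assumes r_pos: "0 < r"
begin

abbreviation "m \<equiv> (2::nat) ^ r"
abbreviation "q \<equiv> 2 * m"
abbreviation "w \<equiv> zeta q"
abbreviation "\<Phi> \<equiv> cyclotomic_pow2 r"

lemma even_m: "even m"
  using r_pos by simp

lemma w_power: "w ^ j = cis (2 * pi * real j / real q)"
  unfolding zeta_def Complex.DeMoivre by (simp add: field_simps)

lemma w_power_m: "w ^ m = -1"
proof -
  have "2 * pi * real m / real q = pi" by simp
  then show ?thesis by (simp add: w_power)
qed

lemma w_power_q: "w ^ q = 1"
proof -
  have "w ^ q = (w ^ m) ^ 2" by (simp only: mult.commute[of 2] power_mult)
  then show ?thesis by (simp add: w_power_m)
qed

lemma w_power_mod_q: "w ^ j = w ^ (j mod q)"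
proof -
  have "w ^ j = w ^ (q * (j div q) + j mod q)" by simp
  also have "\<dots> = (w ^ q) ^ (j div q) * w ^ (j mod q)" by (simp only: power_add power_mult)
  finally show ?thesis by (simp add: w_power_q)
qed

lemma w_power_neq_1:
  assumes "0 < j" "j < q"
  shows "w ^ j \<noteq> 1"
proof
  assume "w ^ j = 1"
  then have "cos (2 * pi * real j / real q) = 1"
    by (simp add: w_power cis.sel(1)[symmetric] del: cis.sel)
  then obtain t :: int where "2 * pi * real j / real q = t * 2 * pi"
    by (auto simp: cos_one_2pi_int)
  then have "real j = t * real q" by (simp add: field_simps)
  then have "int j = t * int q" by (metis of_int_eq_iff of_int_mult of_int_of_nat_eq)
  moreover have "0 < int j" "int j < int q" using assms by (simp_all only: of_nat_less_iff of_nat_0_less_iff)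
  ultimately show False
  proof (cases "t \<le> 0")
    case False
    then have "1 * int q \<le> t * int q" by (intro mult_right_mono) auto
    with \<open>int j = t * int q\<close> \<open>int j < int q\<close> show False by simp
  next
    case True
    then have "t * int q \<le> 0" by (simp add: mult_nonpos_nonneg)
    with \<open>int j = t * int q\<close> \<open>0 < int j\<close> show False by linarith
  qed
qed

lemma cnj_w_mult_w: "cnj w * w = 1"
  by (simp add: zeta_def cis_cnj cis_mult)

lemma cnj_w_power: "cnj (w ^ j) = w ^ (j * (q - 1))"
proof -
  have "w ^ (q - 1) * w = 1"
    using power_minus_mult[of q w] w_power_q by simp
  moreover have "w \<noteq> 0" by (simp add: zeta_def)
  ultimately have "cnj w = w ^ (q - 1)" using cnj_w_mult_w by (metis mult_right_cancel)
  then have "cnj (w ^ j) = (w ^ (q - 1)) ^ j" by simp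
  then show ?thesis by (simp only: power_mult[symmetric] mult.commute)
qed

lemma poly_Phi_odd_power:
  assumes "odd t"
  shows "poly (cpoly \<Phi>) (w ^ t) = 0"
proof -
  have "(w ^ t) ^ m = (w ^ m) ^ t" by (simp only: power_mult[symmetric] mult.commute)
  then show ?thesis using assms by (simp add: cyclotomic_pow2_def w_power_m)
qed

lemma degree_ge_m_if_root:
  assumes "G \<noteq> 0" "poly (cpoly G) w = 0"
  shows "m \<le> degree G"
proof (rule ccontr)
  assume "\<not> m \<le> degree G"
  let ?root = "\<lambda>G. G \<noteq> 0 \<and> poly (cpoly G) w = 0"
  obtain G0 where G0: "?root G0" and minimal: "\<And>G'. ?root G' \<Longrightarrow> degree G0 \<le> degree G'"
    using ex_has_least_nat[of ?root G degree] assms by blast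
  have "degree G0 < m" using minimal[of G] assms \<open>\<not> m \<le> degree G\<close> by auto
  obtain Q R where QR: "pseudo_divmod \<Phi> G0 = (Q, R)" by (cases "pseudo_divmod \<Phi> G0") auto
  define c where "c = lead_coeff G0 ^ (Suc (degree \<Phi>) - degree G0)"
  have div: "smult c \<Phi> = G0 * Q + R"
    unfolding c_def by (rule pseudo_divmod(1)[OF _ QR]) (use G0 in auto)
  have "R = 0 \<or> degree R < degree G0"
    by (rule pseudo_divmod(2)[OF _ QR]) (use G0 in auto)
  moreover have "poly (cpoly R) w = 0"
    using arg_cong[OF div, of "\<lambda>P. poly (cpoly P) w"] G0 poly_Phi_odd_power[of 1] by simp
  ultimately have "R = 0" using minimal[of R] by fastforce
  have "c \<noteq> 0" unfolding c_def using G0 by simp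
  have "G0 * Q = \<Phi> * [:c:]" using div \<open>R = 0\<close> by (simp add: mult.commute)
  then have "\<Phi> dvd G0 * Q" by (metis dvd_triv_left)
  then consider "\<Phi> dvd G0" | "\<Phi> dvd Q"
    using prime_elem_dvd_multD irreducible_imp_prime_poly[OF irreducible_cyclotomic_pow2] by blast
  then show False
  proof cases
    case 1
    then have "degree \<Phi> \<le> degree G0" using G0 by (simp add: dvd_imp_degree_le)
    with \<open>degree G0 < m\<close> show False by (simp add: degree_cyclotomic_pow2)
  next
    case 2
    then obtain Q' where "Q = \<Phi> * Q'" by blast
    with div \<open>R = 0\<close> have "smult c \<Phi> = \<Phi> * (G0 * Q')" by (simp add: ac_simps)
    then have "\<Phi> * [:c:] = \<Phi> * (G0 * Q')" by (simp add: mult.commute)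
    then have "[:c:] = G0 * Q'" using mult_left_cancel[OF cyclotomic_pow2_nonzero] by blast
    moreover from this \<open>c \<noteq> 0\<close> have "Q' \<noteq> 0" by auto
    ultimately have "degree G0 = 0" using G0 degree_mult_eq[of G0 Q'] by (metis add_is_0 degree_pCons_0)
    with G0 show False by (auto elim: degree_eq_zeroE)
  qed
qed

lemma Phi_dvd_if_root:
  assumes "poly (cpoly G) w = 0"
  shows "\<Phi> dvd G"
proof -
  obtain Q R where div: "G = \<Phi> * Q + R" and "R = 0 \<or> degree R < m"
    by (rule pseudo_divmod_cyclotomic_pow2)
  moreover have "poly (cpoly R) w = 0"
    using arg_cong[OF div, of "\<lambda>P. poly (cpoly P) w"] assms poly_Phi_odd_power[of 1] by simp
  ultimately have "R = 0" using degree_ge_m_if_root[of R] by fastforce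
  then show ?thesis using div by simp
qed

lemma root_odd_power_if_root: "poly (cpoly G) w = 0 \<Longrightarrow> odd t \<Longrightarrow> poly (cpoly G) (w ^ t) = 0"
  by (auto dest!: Phi_dvd_if_root simp: poly_Phi_odd_power)

section \<open>The ring \<open>\<int>[w]\<close> and its prime \<open>1 - w\<close>\<close>

definition in_Zw :: "complex \<Rightarrow> bool" where
  "in_Zw z \<longleftrightarrow> (\<exists>P. z = poly (cpoly P) w)"

definition dvd_Zw :: "complex \<Rightarrow> complex \<Rightarrow> bool" where
  "dvd_Zw a z \<longleftrightarrow> (\<exists>y. in_Zw y \<and> z = a * y)"

lemma in_Zw_poly [intro]: "in_Zw (poly (cpoly P) w)"
  unfolding in_Zw_def by blast

lemma in_Zw_of_int [intro]: "in_Zw (of_int c)"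
  unfolding in_Zw_def by (rule exI[of _ "[:c:]"]) simp

lemma in_Zw_0 [intro]: "in_Zw 0" and in_Zw_1 [intro]: "in_Zw 1"
  using in_Zw_of_int[of 0] in_Zw_of_int[of 1] by simp_all

lemma in_Zw_w [intro]: "in_Zw w"
  unfolding in_Zw_def by (rule exI[of _ "[:0, 1:]"]) simp

lemma in_Zw_add [intro]: "in_Zw a \<Longrightarrow> in_Zw b \<Longrightarrow> in_Zw (a + b)"
  unfolding in_Zw_def by (metis cpoly_add poly_add)

lemma in_Zw_mult [intro]: "in_Zw a \<Longrightarrow> in_Zw b \<Longrightarrow> in_Zw (a * b)"
  unfolding in_Zw_def by (metis cpoly_mult poly_mult)

lemma in_Zw_uminus [intro]: "in_Zw a \<Longrightarrow> in_Zw (- a)"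
  using in_Zw_mult[OF in_Zw_of_int[of "-1"]] by simp

lemma in_Zw_diff [intro]: "in_Zw a \<Longrightarrow> in_Zw b \<Longrightarrow> in_Zw (a - b)"
  using in_Zw_add in_Zw_uminus by (metis diff_conv_add_uminus)

lemma in_Zw_power [intro]: "in_Zw a \<Longrightarrow> in_Zw (a ^ n)"
  by (induction n) auto

lemma in_Zw_sum [intro]: "(\<And>x. x \<in> A \<Longrightarrow> in_Zw (f x)) \<Longrightarrow> in_Zw (sum f A)"
  by (induction A rule: infinite_finite_induct) auto

lemma in_Zw_cnj [intro]:
  assumes "in_Zw z"
  shows "in_Zw (cnj z)"
proof -
  obtain P where "z = poly (cpoly P) w" using assms in_Zw_def by blast
  then have "cnj z = poly (cpoly P) (poly (cpoly (monom 1 (q - 1))) w)"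
    using cnj_w_power[of 1] by (simp add: poly_cpoly_cnj[symmetric] poly_monom)
  then show ?thesis by (metis in_Zw_poly poly_cpoly_pcompose)
qed

lemma dvd_Zw_mult: "dvd_Zw a x \<Longrightarrow> dvd_Zw b y \<Longrightarrow> dvd_Zw (a * b) (x * y)"
  unfolding dvd_Zw_def by (metis in_Zw_mult mult.assoc mult.left_commute)

lemma dvd_Zw_power: "dvd_Zw a x \<Longrightarrow> dvd_Zw (a ^ n) (x ^ n)"
  by (induction n) (auto simp: dvd_Zw_def intro: dvd_Zw_mult[unfolded dvd_Zw_def])

lemma dvd_Zw_mult_cancel_left: "c \<noteq> 0 \<Longrightarrow> dvd_Zw (c * a) (c * z) \<Longrightarrow> dvd_Zw a z"
  unfolding dvd_Zw_def by (auto simp: mult.assoc)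

abbreviation "\<pi> \<equiv> 1 - w"

lemma pi_nonzero: "\<pi> \<noteq> 0"
proof -
  have "1 < q" using one_le_power[of "2::nat" r] by linarith
  then show ?thesis using w_power_neq_1[of 1] by auto
qed

lemma pi_dvd_1_minus_w_power: "dvd_Zw \<pi> (1 - w ^ j)"
  unfolding dvd_Zw_def using one_diff_power_eq[of w j]
  by (intro exI[of _ "\<Sum>i<j. w ^ i"]) auto

lemma pi_dvd_2: "dvd_Zw \<pi> 2"
  using pi_dvd_1_minus_w_power[of m] w_power_m by simp

text \<open>With \<open>v = w^(2^i t)\<close>: \<open>1 - v^2 = (1 - v)(1 + v)\<close>, and \<open>1 + v = 1 - w^(2^i (t + 2^(r-i)))\<close>
  is covered by the induction hypothesis.\<close>

lemma pi_power_dvd_1_minus_w_power: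
  assumes "i \<le> r" "odd t"
  shows "dvd_Zw (\<pi> ^ 2 ^ i) (1 - w ^ (2 ^ i * t))"
  using assms
proof (induction i arbitrary: t)
  case 0
  then show ?case using pi_dvd_1_minus_w_power by simp
next
  case (Suc i)
  let ?v = "w ^ (2 ^ i * t)"
  have "0 < r - i" using Suc.prems by simp
  then have "odd (t + 2 ^ (r - i))" using Suc.prems by simp
  moreover have "2 ^ i * (t + 2 ^ (r - i)) = 2 ^ i * t + m"
    using Suc.prems by (simp add: algebra_simps power_add[symmetric])
  ultimately have "dvd_Zw (\<pi> ^ 2 ^ i) (1 + ?v)"
    using Suc.IH[of "t + 2 ^ (r - i)"] Suc.prems by (simp add: power_add w_power_m)
  moreover have "dvd_Zw (\<pi> ^ 2 ^ i) (1 - ?v)" using Suc by simp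
  ultimately have "dvd_Zw (\<pi> ^ 2 ^ i * \<pi> ^ 2 ^ i) ((1 - ?v) * (1 + ?v))"
    by (rule dvd_Zw_mult[rotated])
  moreover have "(1 - ?v) * (1 + ?v) = 1 - w ^ (2 ^ Suc i * t)"
  proof -
    have "2 ^ Suc i * t = 2 ^ i * t + 2 ^ i * t" by simp
    then have "w ^ (2 ^ Suc i * t) = ?v * ?v" by (simp only: power_add)
    then show ?thesis by (simp add: algebra_simps)
  qed
  moreover have "\<pi> ^ 2 ^ i * \<pi> ^ 2 ^ i = \<pi> ^ 2 ^ Suc i"
    by (simp add: power_add[symmetric] mult_2)
  ultimately show ?case by simp
qed

lemma pi_power_m_dvd_2: "dvd_Zw (\<pi> ^ m) 2"
  using pi_power_dvd_1_minus_w_power[of r 1] w_power_m by simp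

text \<open>All middle binomial coefficients of \<open>(1 - w)\<^sup>m\<close> are even and its extreme terms cancel.\<close>

lemma two_dvd_pi_power_m: "dvd_Zw 2 (\<pi> ^ m)"
proof -
  let ?c = "\<lambda>j. of_nat ((m choose j) div 2) * (- w) ^ j"
  have "\<pi> ^ m = (\<Sum>j\<le>m. of_nat (m choose j) * (- w) ^ j)"
    using binomial_ring[of "- w" 1 m] by simp
  also have "\<dots> = (\<Sum>j\<in>{0<..<m}. of_nat (m choose j) * (- w) ^ j) + (1 + (- w) ^ m)"
  proof -
    have "{..m} = insert 0 (insert m {0<..<m})" by auto
    then show ?thesis by (simp add: sum.insert)
  qed
  also have "(- w) ^ m = -1" using even_m w_power_m by simp
  also have "(\<Sum>j\<in>{0<..<m}. of_nat (m choose j) * (- w) ^ j) = (\<Sum>j\<in>{0<..<m}. 2 * ?c j)"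
  proof (rule sum.cong[OF refl])
    fix j assume "j \<in> {0<..<m}"
    then have "m choose j = 2 * ((m choose j) div 2)" using even_binomial_pow2[of j r] by auto
    then show "of_nat (m choose j) * (- w) ^ j = 2 * ?c j"
      by (metis (mono_tags, lifting) mult.assoc of_nat_mult of_nat_numeral)
  qed
  finally have "\<pi> ^ m = 2 * (\<Sum>j\<in>{0<..<m}. ?c j)" by (simp add: sum_distrib_left)
  moreover have "in_Zw (\<Sum>j\<in>{0<..<m}. ?c j)"
    by (intro in_Zw_sum in_Zw_mult in_Zw_power in_Zw_uminus in_Zw_w) (metis in_Zw_of_int of_int_of_nat_eq)
  ultimately show ?thesis unfolding dvd_Zw_def by blast
qed

text \<open>\<open>\<int>[w]/(\<pi>) = \<int>/2\<close>: reduce modulo \<open>w - 1\<close> and then modulo \<open>2\<close>.\<close>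

lemma pi_dvd_or_pi_dvd_minus_1:
  assumes "in_Zw y"
  shows "dvd_Zw \<pi> y \<or> dvd_Zw \<pi> (y - 1)"
proof -
  obtain P where P: "y = poly (cpoly P) w" using assms in_Zw_def by blast
  let ?S = "poly (cpoly (synthetic_div P 1)) w"
  let ?c = "poly P 1"
  have "y = (w - 1) * ?S + of_int ?c"
    using arg_cong[OF synthetic_div_correct'[of 1 P], of "\<lambda>P. poly (cpoly P) w"] P
    by (simp add: algebra_simps)
  moreover obtain u where u: "in_Zw u" "2 = \<pi> * u" using pi_dvd_2 dvd_Zw_def by blast
  moreover have "of_int ?c = 2 * of_int (?c div 2) + (of_int (?c mod 2) :: complex)"
    by (metis of_int_add of_int_mult of_int_numeral div_mult_mod_eq mult.commute)
  ultimately have "y - of_int (?c mod 2) = \<pi> * (of_int (?c div 2) * u - ?S)"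
    by (simp add: algebra_simps)
  moreover have "in_Zw (of_int (?c div 2) * u - ?S)" using u(1) by blast
  ultimately have "dvd_Zw \<pi> (y - of_int (?c mod 2))" unfolding dvd_Zw_def by blast
  moreover have "?c mod 2 = 0 \<or> ?c mod 2 = 1" by auto
  ultimately show ?thesis by auto
qed

lemma not_pi_dvd_1: "\<not> dvd_Zw \<pi> 1"
proof
  assume "dvd_Zw \<pi> 1"
  then obtain Q where Q: "1 = \<pi> * poly (cpoly Q) w" unfolding dvd_Zw_def in_Zw_def by blast
  let ?G = "1 - [:1, -1:] * Q"
  have "poly (cpoly ?G) w = 0" using Q by (simp add: algebra_simps)
  then obtain S where "?G = \<Phi> * S" using Phi_dvd_if_root by blast
  then have "poly ?G 1 = 2 * poly S 1" by (simp add: poly_cyclotomic_pow2_1)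
  then have "1 = 2 * poly S 1" by simp
  then show False by (metis dvd_triv_left odd_one)
qed

lemma pi_dvd_multD:
  assumes "in_Zw a" "in_Zw b" "dvd_Zw \<pi> (a * b)"
  shows "dvd_Zw \<pi> a \<or> dvd_Zw \<pi> b"
proof (rule ccontr)
  assume "\<not> (dvd_Zw \<pi> a \<or> dvd_Zw \<pi> b)"
  then obtain a' b' where a': "in_Zw a'" "a = 1 + \<pi> * a'" and b': "in_Zw b'" "b = 1 + \<pi> * b'"
    using pi_dvd_or_pi_dvd_minus_1 assms(1,2) unfolding dvd_Zw_def
    by (metis add.commute diff_add_cancel)
  obtain c where c: "in_Zw c" "a * b = \<pi> * c" using assms(3) dvd_Zw_def by blast
  define x where "x = a' + b' + \<pi> * a' * b'"
  have "a * b = 1 + \<pi> * x" unfolding x_def a'(2) b'(2) by (simp add: algebra_simps)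
  then have "1 = \<pi> * (c - x)" using c(2) by (simp add: algebra_simps)
  moreover have "in_Zw (c - x)" unfolding x_def using a'(1) b'(1) c(1) by blast
  ultimately show False using not_pi_dvd_1 unfolding dvd_Zw_def by blast
qed

lemma cnj_pi: "cnj \<pi> = - cnj w * \<pi>"
  using cnj_w_mult_w by (simp add: algebra_simps)

lemma pi_dvd_cnjD:
  assumes "dvd_Zw \<pi> (cnj y)"
  shows "dvd_Zw \<pi> y"
proof -
  obtain s where s: "in_Zw s" "cnj y = \<pi> * s" using assms dvd_Zw_def by blast
  have "y = cnj (cnj y)" by simp
  also have "\<dots> = cnj (\<pi> * s)" by (simp only: s(2))
  also have "\<dots> = \<pi> * (- cnj w * cnj s)" by (simp only: complex_cnj_mult cnj_pi ac_simps)
  finally have "y = \<pi> * (- cnj w * cnj s)" .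
  moreover have "in_Zw (- cnj w * cnj s)" using s(1) by (intro in_Zw_mult in_Zw_uminus in_Zw_cnj in_Zw_w)
  ultimately show ?thesis unfolding dvd_Zw_def by blast
qed

lemma pi_dvd_if_dvd_norm:
  assumes "in_Zw z" "dvd_Zw \<pi> (z * cnj z)"
  shows "dvd_Zw \<pi> z"
  using pi_dvd_multD[OF assms(1) in_Zw_cnj[OF assms(1)] assms(2)] pi_dvd_cnjD by blast

text \<open>\<open>\<pi>\<close> is prime and associate to its conjugate, so each factor \<open>\<pi>\<^sup>2\<close> of \<open>z z\<^sup>*\<close> comes from
  one factor \<open>\<pi>\<close> of \<open>z\<close>.\<close>

lemma pi_power_dvd_if_dvd_norm:
  assumes "in_Zw z" "dvd_Zw (\<pi> ^ (2 * j)) (z * cnj z)"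
  shows "dvd_Zw (\<pi> ^ j) z"
  using assms
proof (induction j arbitrary: z)
  case 0
  then show ?case unfolding dvd_Zw_def by (intro exI[of _ z]) simp
next
  case (Suc j)
  obtain s where s: "in_Zw s" "z * cnj z = \<pi> ^ (2 * Suc j) * s"
    using Suc.prems(2) dvd_Zw_def by blast
  have "z * cnj z = \<pi> * (\<pi> ^ Suc (2 * j) * s)" using s(2) by simp
  moreover have "in_Zw (\<pi> ^ Suc (2 * j) * s)" using s(1) by blast
  ultimately have "dvd_Zw \<pi> (z * cnj z)" unfolding dvd_Zw_def by blast
  then obtain y where y: "in_Zw y" "z = \<pi> * y"
    using pi_dvd_if_dvd_norm[OF Suc.prems(1)] dvd_Zw_def by blast
  have norm_z: "z * cnj z = \<pi> ^ 2 * (- cnj w * (y * cnj y))"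
    using y(2) cnj_pi by (simp add: power2_eq_square ac_simps)
  have "\<pi> ^ (2 * Suc j) = \<pi> ^ 2 * \<pi> ^ (2 * j)"
    by (simp add: power_add[symmetric])
  then have "dvd_Zw (\<pi> ^ 2 * \<pi> ^ (2 * j)) (\<pi> ^ 2 * (- cnj w * (y * cnj y)))"
    using Suc.prems(2) by (simp only: norm_z)
  then have "dvd_Zw (\<pi> ^ (2 * j)) (- cnj w * (y * cnj y))"
    by (rule dvd_Zw_mult_cancel_left[rotated]) (use pi_nonzero in simp)
  then obtain t where t: "in_Zw t" "- cnj w * (y * cnj y) = \<pi> ^ (2 * j) * t"
    using dvd_Zw_def by blast
  have "y * cnj y = - w * (- cnj w * (y * cnj y))"
    using cnj_w_mult_w by (simp add: mult.assoc[symmetric] mult.commute[of w])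
  also have "\<dots> = - w * (\<pi> ^ (2 * j) * t)" by (simp only: t(2))
  also have "\<dots> = \<pi> ^ (2 * j) * (- w * t)" by (simp only: ac_simps)
  finally have "y * cnj y = \<pi> ^ (2 * j) * (- w * t)" .
  moreover have "in_Zw (- w * t)" using t(1) by (intro in_Zw_mult in_Zw_uminus in_Zw_w)
  ultimately have "dvd_Zw (\<pi> ^ (2 * j)) (y * cnj y)" unfolding dvd_Zw_def by blast
  then have "dvd_Zw (\<pi> ^ j) y" using Suc.IH y(1) by blast
  then show ?case using y(2) unfolding dvd_Zw_def by (auto simp: mult.assoc)
qed

lemma pow2_dvd_if_norm_eq:
  assumes "in_Zw z" "z * cnj z = 2 ^ (2 * h)"
  shows "dvd_Zw (2 ^ h) z"
proof -
  have "dvd_Zw ((\<pi> ^ m) ^ (2 * h)) (z * cnj z)"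
    unfolding assms(2) by (rule dvd_Zw_power[OF pi_power_m_dvd_2])
  then have "dvd_Zw (\<pi> ^ (2 * (m * h))) (z * cnj z)"
    by (simp only: power_mult[symmetric] ac_simps)
  then have "dvd_Zw ((\<pi> ^ m) ^ h) z"
    using pi_power_dvd_if_dvd_norm[OF assms(1)] by (simp only: power_mult[symmetric])
  moreover have "dvd_Zw (2 ^ h) ((\<pi> ^ m) ^ h)" by (rule dvd_Zw_power[OF two_dvd_pi_power_m])
  ultimately show ?thesis unfolding dvd_Zw_def by (metis in_Zw_mult mult.assoc)
qed

text \<open>\<open>1, w, \<dots>, w^(m-1)\<close> is a \<open>\<int>\<close>-basis of \<open>\<int>[w]\<close>, so divisibility by an integer in \<open>\<int>[w]\<close>
  can be read off the coefficients.\<close>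

lemma pow2_dvd_coeff_if_norm_eq:
  assumes "degree P < m" and "poly (cpoly P) w * cnj (poly (cpoly P) w) = 2 ^ (2 * h)"
  shows "2 ^ h dvd coeff P j"
proof -
  obtain Q where Q: "poly (cpoly P) w = 2 ^ h * poly (cpoly Q) w"
    using pow2_dvd_if_norm_eq[OF in_Zw_poly assms(2)] unfolding dvd_Zw_def in_Zw_def by blast
  obtain Q1 R where "Q = \<Phi> * Q1 + R" and R: "R = 0 \<or> degree R < m"
    by (rule pseudo_divmod_cyclotomic_pow2)
  then have "poly (cpoly Q) w = poly (cpoly R) w"
    using poly_Phi_odd_power[of 1] by simp
  then have root: "poly (cpoly (P - smult (2 ^ h) R)) w = 0" using Q by simp
  from R have "degree (smult (2 ^ h) R) < m" by (auto intro: le_less_trans[OF degree_smult_le])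
  then have "degree (P - smult (2 ^ h) R) < m" using assms(1) by (rule degree_diff_less[rotated])
  then have "P = smult (2 ^ h) R" using degree_ge_m_if_root[OF _ root] by fastforce
  then show ?thesis by simp
qed

section \<open>Parseval's identity over the conjugates of \<open>w\<close>\<close>

lemma sum_odd_powers_w_power:
  assumes "\<not> m dvd D"
  shows "(\<Sum>t<m. (w ^ D) ^ (2 * t + 1)) = 0"
proof -
  let ?y = "(w ^ D) ^ 2"
  have "0 < (2 * D) mod q" using assms by (simp add: mod_greater_zero_iff_not_dvd)
  moreover have "?y = w ^ ((2 * D) mod q)"
    using w_power_mod_q[of "2 * D"] by (simp only: power_mult[symmetric] mult.commute)
  ultimately have "?y \<noteq> 1" using w_power_neq_1[of "(2 * D) mod q"] by simp
  moreover have "?y ^ m = (w ^ q) ^ D" by (simp only: power_mult[symmetric] ac_simps)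
  ultimately have geometric: "(\<Sum>t<m. ?y ^ t) = 0" using geometric_sum[of ?y m] w_power_q by simp
  have "(w ^ D) ^ (2 * t + 1) = ?y ^ t * w ^ D" for t
    by (simp only: power_add power_mult power_one_right)
  then have "(\<Sum>t<m. (w ^ D) ^ (2 * t + 1)) = (\<Sum>t<m. ?y ^ t) * w ^ D"
    by (simp only: sum_distrib_right)
  then show ?thesis by (simp only: geometric mult_zero_left)
qed

lemma odd_powers_w_orthogonal:
  assumes "j < m" "j' < m"
  shows "(\<Sum>t<m. (w ^ (2 * t + 1)) ^ j * cnj (w ^ (2 * t + 1)) ^ j')
       = (if j = j' then of_nat m else 0)"
proof -
  define D where "D = j + j' * (q - 1)"
  have summand: "(w ^ (2 * t + 1)) ^ j * cnj (w ^ (2 * t + 1)) ^ j' = (w ^ D) ^ (2 * t + 1)" for t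
  proof -
    have "cnj (w ^ (2 * t + 1)) ^ j' = cnj (w ^ ((2 * t + 1) * j'))"
      by (simp only: complex_cnj_power power_mult)
    also have "\<dots> = w ^ ((2 * t + 1) * j' * (q - 1))" by (rule cnj_w_power)
    finally have "(w ^ (2 * t + 1)) ^ j * cnj (w ^ (2 * t + 1)) ^ j'
        = w ^ ((2 * t + 1) * j + (2 * t + 1) * j' * (q - 1))"
      by (simp only: power_mult power_add)
    also have "(2 * t + 1) * j + (2 * t + 1) * j' * u = (j + j' * u) * (2 * t + 1)" for u
      by (simp add: algebra_simps)
    then have "(2 * t + 1) * j + (2 * t + 1) * j' * (q - 1) = D * (2 * t + 1)"
      unfolding D_def .
    finally show ?thesis by (simp only: power_mult)
  qed
  have "q - 1 + 1 = q" by simp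
  then have "D + j' = j + j' * q"
    unfolding D_def by (metis add.assoc add_mult_distrib2 mult_1_right)
  show ?thesis
  proof (cases "j = j'")
    case True
    then have "D = q * j'" using \<open>D + j' = j + j' * q\<close> by simp
    then have "w ^ D = 1" by (simp only: power_mult[of w q j'] w_power_q power_one)
    then have "(\<Sum>t<m. (w ^ (2 * t + 1)) ^ j * cnj (w ^ (2 * t + 1)) ^ j') = (\<Sum>t<m. 1)"
      by (simp only: summand power_one)
    then show ?thesis using True by simp
  next
    case False
    have "\<not> m dvd D"
    proof
      assume "m dvd D"
      then have "j' mod m = (D + j') mod m" by (auto elim!: dvdE)
      also have "\<dots> = (j + (2 * j') * m) mod m" unfolding \<open>D + j' = j + j' * q\<close> by (simp add: ac_simps)
      also have "\<dots> = j mod m" by (rule mod_mult_self1)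
      finally show False using assms False by simp
    qed
    then have "(\<Sum>t<m. (w ^ (2 * t + 1)) ^ j * cnj (w ^ (2 * t + 1)) ^ j') = 0"
      by (simp only: summand sum_odd_powers_w_power[OF \<open>\<not> m dvd D\<close>])
    then show ?thesis using False by simp
  qed
qed

text \<open>Every conjugate \<open>w^(2t+1)\<close> of \<open>w\<close> gives the same value of \<open>|P|^2\<close>, because
  \<open>P(x) P(x^(q-1)) - c\<close> vanishes at \<open>w\<close>; averaging over them isolates \<open>\<Sum> coeff P j^2\<close>.\<close>

lemma parseval:
  assumes deg: "degree P < m" and norm: "poly (cpoly P) w * cnj (poly (cpoly P) w) = of_int c"
  shows "(\<Sum>j<m. coeff P j ^ 2) = c"
proof -
  let ?x = "\<lambda>t. w ^ (2 * t + 1)"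
  let ?c = "\<lambda>j. (of_int (coeff P j) :: complex)"
  define T where "T = P * pcompose P (monom 1 (q - 1)) - [:c:]"
  have T: "poly (cpoly T) (w ^ s) = poly (cpoly P) (w ^ s) * cnj (poly (cpoly P) (w ^ s)) - of_int c"
    for s
  proof -
    have "poly (cpoly (pcompose P (monom 1 (q - 1)))) (w ^ s) = poly (cpoly P) ((w ^ s) ^ (q - 1))"
      by (simp add: poly_cpoly_pcompose poly_monom)
    also have "(w ^ s) ^ (q - 1) = cnj (w ^ s)" by (simp only: cnj_w_power power_mult)
    also have "poly (cpoly P) (cnj (w ^ s)) = cnj (poly (cpoly P) (w ^ s))" by (rule poly_cpoly_cnj)
    finally show ?thesis unfolding T_def by simp
  qed
  have "poly (cpoly T) w = 0" using T[of 1] norm by simp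
  then have "poly (cpoly T) (?x t) = 0" for t by (rule root_odd_power_if_root) simp
  then have "poly (cpoly P) (?x t) * cnj (poly (cpoly P) (?x t)) = of_int c" for t
    using T[of "2 * t + 1"] by simp
  then have "of_nat m * of_int c = (\<Sum>t<m. poly (cpoly P) (?x t) * cnj (poly (cpoly P) (?x t)))"
    by simp
  also have "\<dots> = (\<Sum>t<m. \<Sum>j<m. \<Sum>j'<m. ?c j * ?c j' * ((?x t) ^ j * cnj (?x t) ^ j'))"
  proof (rule sum.cong[OF refl])
    fix t
    have "poly (cpoly P) (?x t) * cnj (poly (cpoly P) (?x t))
        = poly (cpoly P) (?x t) * poly (cpoly P) (cnj (?x t))"
      by (simp only: poly_cpoly_cnj)
    also have "\<dots> = (\<Sum>j<m. ?c j * ?x t ^ j) * (\<Sum>j'<m. ?c j' * cnj (?x t) ^ j')"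
      by (simp only: poly_cpoly_eq_sum[OF deg])
    finally show "poly (cpoly P) (?x t) * cnj (poly (cpoly P) (?x t))
        = (\<Sum>j<m. \<Sum>j'<m. ?c j * ?c j' * ((?x t) ^ j * cnj (?x t) ^ j'))"
      by (simp only: sum_product ac_simps)
  qed
  also have "\<dots> = (\<Sum>j<m. \<Sum>j'<m. \<Sum>t<m. ?c j * ?c j' * ((?x t) ^ j * cnj (?x t) ^ j'))"
    by (subst sum.swap) (intro sum.cong refl sum.swap)
  also have "\<dots> = (\<Sum>j<m. \<Sum>j'<m. ?c j * ?c j' * (\<Sum>t<m. (?x t) ^ j * cnj (?x t) ^ j'))"
    by (simp only: sum_distrib_left)
  also have "\<dots> = (\<Sum>j<m. \<Sum>j'<m. if j = j' then ?c j * ?c j' * of_nat m else 0)"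
  proof (intro sum.cong refl)
    fix j j' assume "j \<in> {..<m}" "j' \<in> {..<m}"
    then have "(\<Sum>t<m. (?x t) ^ j * cnj (?x t) ^ j') = (if j = j' then of_nat m else 0)"
      by (intro odd_powers_w_orthogonal) auto
    then show "?c j * ?c j' * (\<Sum>t<m. (?x t) ^ j * cnj (?x t) ^ j')
        = (if j = j' then ?c j * ?c j' * of_nat m else 0)"
      by simp
  qed
  also have "\<dots> = (\<Sum>j<m. of_nat m * ?c j * ?c j)"
    by (simp add: sum.delta' ac_simps)
  finally have "of_nat m * of_int c = (of_nat m * of_int (\<Sum>j<m. coeff P j ^ 2) :: complex)"
    by (simp add: sum_distrib_left power2_eq_square mult.assoc)
  then show ?thesis by (simp del: of_int_sum)
qed

lemma coeff_spike_if_norm_eq: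
  assumes "degree P < m" and "cmod (poly (cpoly P) w) = 2 ^ h"
  shows "\<exists>j0<m. \<bar>coeff P j0\<bar> = 2 ^ h \<and> (\<forall>j. j \<noteq> j0 \<longrightarrow> coeff P j = 0)"
proof -
  have norm: "poly (cpoly P) w * cnj (poly (cpoly P) w) = 2 ^ (2 * h)"
    using assms(2) by (simp add: complex_norm_square[symmetric] power_even_eq)
  define d where "d j = coeff P j div 2 ^ h" for j
  have coeff_d: "coeff P j = 2 ^ h * d j" for j
    using pow2_dvd_coeff_if_norm_eq[OF assms(1) norm] unfolding d_def by simp
  have "(\<Sum>j<m. coeff P j ^ 2) = 2 ^ (2 * h)"
    using parseval[OF assms(1), of "2 ^ (2 * h)"] norm by simp
  then have "2 ^ (2 * h) * (\<Sum>j<m. d j ^ 2) = 2 ^ (2 * h) * 1"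
    by (simp add: coeff_d power_mult_distrib power_even_eq sum_distrib_left)
  then have "(\<Sum>j<m. d j ^ 2) = 1" by simp
  then obtain j0 where "j0 < m" "d j0 ^ 2 = 1" and zero: "\<forall>j<m. j \<noteq> j0 \<longrightarrow> d j = 0"
    using sum_power2_eq_1_imp_single[of "{..<m}" d] by auto
  then have "\<bar>coeff P j0\<bar> = 2 ^ h" by (auto simp: coeff_d abs_mult power2_eq_1_iff)
  moreover have "coeff P j = 0" if "j \<noteq> j0" for j
    using zero that assms(1) coeff_eq_0[of P j] by (cases "j < m") (auto simp: coeff_d)
  ultimately show ?thesis using \<open>j0 < m\<close> by blast
qed

end

section \<open>Walsh transforms of the component functions\<close>

definition low_part :: "nat \<Rightarrow> (nat \<Rightarrow> bool list \<Rightarrow> bool) \<Rightarrow> bool list \<Rightarrow> nat" where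
  "low_part k a x = (\<Sum>i<k - 1. 2 ^ i * (if a (Suc i) x then 1 else 0))"

definition walsh_sign :: "nat \<Rightarrow> (nat \<Rightarrow> bool list \<Rightarrow> bool) \<Rightarrow> bool list \<Rightarrow> bool list \<Rightarrow> int" where
  "walsh_sign k a u x = (if a k x \<noteq> dotp u x then -1 else 1)"

definition gwht_poly :: "nat \<Rightarrow> nat \<Rightarrow> (nat \<Rightarrow> bool list \<Rightarrow> bool) \<Rightarrow> bool list \<Rightarrow> int poly" where
  "gwht_poly n k a u = (\<Sum>x\<in>vecs n. monom (walsh_sign k a u x) (low_part k a x))"

definition bit_character :: "nat \<Rightarrow> (nat \<Rightarrow> bool) \<Rightarrow> nat \<Rightarrow> int" where
  "bit_character k c j =
     (if even (card {i. 1 \<le> i \<and> i \<le> k - 1 \<and> c i \<and> odd (j div 2 ^ (i - 1))}) then 1 else -1)"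

lemma finite_vecs: "finite (vecs n)"
  unfolding vecs_def using finite_lists_length_eq[of "UNIV :: bool set" n] by simp

lemma low_part_less: "low_part k a x < 2 ^ (k - 1)"
  unfolding low_part_def by (rule sum_bits_less)

lemma gfun_eq_low_part: "0 < k \<Longrightarrow> gfun k a x = low_part k a x + 2 ^ (k - 1) * (if a k x then 1 else 0)"
  unfolding gfun_def low_part_def
  by (cases k) (simp_all add: sum.atLeast1_atMost_eq)

lemma sum_coeff_sum_monom:
  fixes e :: "'x \<Rightarrow> int" and g :: "nat \<Rightarrow> int"
  assumes "finite X" "\<And>x. x \<in> X \<Longrightarrow> r x < M"
  shows "(\<Sum>j<M. coeff (\<Sum>x\<in>X. monom (e x) (r x)) j * g j) = (\<Sum>x\<in>X. e x * g (r x))"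
proof -
  have "coeff (\<Sum>x\<in>X. monom (e x) (r x)) j * g j = (\<Sum>x\<in>X. if r x = j then e x * g j else 0)"
    for j
    by (simp add: coeff_sum coeff_monom sum_distrib_right) (rule sum.cong; simp)
  then have "(\<Sum>j<M. coeff (\<Sum>x\<in>X. monom (e x) (r x)) j * g j)
      = (\<Sum>j<M. \<Sum>x\<in>X. if r x = j then e x * g j else 0)"
    by simp
  also have "\<dots> = (\<Sum>x\<in>X. \<Sum>j<M. if r x = j then e x * g j else 0)" by (rule sum.swap)
  also have "\<dots> = (\<Sum>x\<in>X. e x * g (r x))" using assms(2) by (simp add: sum.delta)
  finally show ?thesis .
qed

lemma wht_gc_eq_sum_coeffs:
  assumes "0 < k"
  shows "wht n (gc k a c) u
       = of_int (\<Sum>j<2 ^ (k - 1). coeff (gwht_poly n k a u) j * bit_character k c j)"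
proof -
  have "sgn2 (gc k a c x \<noteq> dotp u x) = of_int (walsh_sign k a u x * bit_character k c (low_part k a x))"
    for x
  proof -
    define A where "A = {i. 1 \<le> i \<and> i \<le> k - 1 \<and> c i \<and> a i x}"
    have "odd (low_part k a x div 2 ^ (i - 1)) \<longleftrightarrow> a i x" if "1 \<le> i" "i \<le> k - 1" for i
    proof -
      have "i - 1 < k - 1" using that by linarith
      then show ?thesis
        using that odd_sum_bits_div_pow2_iff[where K = "k - 1" and b = "\<lambda>i. a (Suc i) x" and j = "i - 1"]
        unfolding low_part_def by simp
    qed
    then have "bit_character k c (low_part k a x) = (if even (card A) then 1 else -1)"
      unfolding bit_character_def A_def by (metis (lifting))
    moreover have "gc k a c x = odd (card A + (if a k x then 1 else 0))"
    proof -
      have "finite A" unfolding A_def by (rule finite_subset[of _ "{..k}"]) auto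
      moreover have "A \<inter> {i. i = k \<and> a k x} = {}" unfolding A_def using assms by auto
      moreover have "card {i. i = k \<and> a k x} = (if a k x then 1 else 0)" by auto
      ultimately show ?thesis
        unfolding gc_def A_def[symmetric] by (simp add: card_Un_disjoint)
    qed
    ultimately show ?thesis by (auto simp: walsh_sign_def sgn2_def)
  qed
  then have "wht n (gc k a c) u = of_int (\<Sum>x\<in>vecs n. walsh_sign k a u x * bit_character k c (low_part k a x))"
    unfolding wht_def by simp
  also have "(\<Sum>x\<in>vecs n. walsh_sign k a u x * bit_character k c (low_part k a x))
      = (\<Sum>j<2 ^ (k - 1). coeff (gwht_poly n k a u) j * bit_character k c j)"
    unfolding gwht_poly_def by (rule sum_coeff_sum_monom[symmetric, OF finite_vecs low_part_less])
  finally show ?thesis .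
qed

context pow2_root_of_unity
begin

lemma degree_gwht_poly: "degree (gwht_poly n (Suc r) a u) < m"
proof -
  have "coeff (gwht_poly n (Suc r) a u) j = 0" if "m \<le> j" for j
  proof -
    have "low_part (Suc r) a x \<noteq> j" for x using low_part_less[of "Suc r" a x] that by simp
    then show ?thesis by (simp add: gwht_poly_def coeff_sum coeff_monom)
  qed
  then have "degree (gwht_poly n (Suc r) a u) \<le> m - 1" by (intro degree_le) auto
  moreover have "0 < m" by simp
  ultimately show ?thesis by linarith
qed

lemma gwht_eq_poly_gwht_poly: "gwht n q (gfun (Suc r) a) u = poly (cpoly (gwht_poly n (Suc r) a u)) w"
proof -
  have "zeta q ^ (gfun (Suc r) a x mod q) * sgn2 (dotp u x)
      = of_int (walsh_sign (Suc r) a u x) * w ^ low_part (Suc r) a x" for x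
  proof -
    have "gfun (Suc r) a x < q"
      using gfun_eq_low_part[of "Suc r" a x] low_part_less[of "Suc r" a x] by (cases "a (Suc r) x") auto
    then show ?thesis
      using gfun_eq_low_part[of "Suc r" a x] w_power_m
      by (cases "a (Suc r) x"; cases "dotp u x") (simp_all add: walsh_sign_def sgn2_def power_add)
  qed
  then show ?thesis unfolding gwht_def gwht_poly_def by (simp add: poly_sum poly_monom)
qed

lemma norm_wht_gc_eq:
  assumes "cmod (gwht n q (gfun (Suc r) a) u) = 2 ^ h"
  shows "cmod (wht n (gc (Suc r) a c) u) = 2 ^ h"
proof -
  let ?P = "gwht_poly n (Suc r) a u" and ?\<chi> = "bit_character (Suc r) c"
  obtain j0 where "j0 < m" "\<bar>coeff ?P j0\<bar> = 2 ^ h" "\<forall>j. j \<noteq> j0 \<longrightarrow> coeff ?P j = 0"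
    using coeff_spike_if_norm_eq[OF degree_gwht_poly] assms[unfolded gwht_eq_poly_gwht_poly] by blast
  then have "(\<Sum>j<m. coeff ?P j * ?\<chi> j) = (\<Sum>j<m. if j = j0 then coeff ?P j0 * ?\<chi> j0 else 0)"
    by (intro sum.cong) auto
  also have "\<dots> = coeff ?P j0 * ?\<chi> j0" using \<open>j0 < m\<close> by simp
  finally have "wht n (gc (Suc r) a c) u = of_int (coeff ?P j0 * ?\<chi> j0)"
    using wht_gc_eq_sum_coeffs[of "Suc r" n a c u] by simp
  moreover have "\<bar>coeff ?P j0 * ?\<chi> j0\<bar> = 2 ^ h"
    using \<open>\<bar>coeff ?P j0\<bar> = 2 ^ h\<close> by (simp add: abs_mult bit_character_def)
  ultimately show ?thesis by (metis norm_of_int of_int_abs of_int_numeral of_int_power)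
qed

end

theorem mainTheorem13:
  fixes n k :: nat and a :: "nat \<Rightarrow> bool list \<Rightarrow> bool"
  assumes "even n" and "k > 1"
    and "gbent n (2 ^ k) (gfun k a)"
  shows "\<forall>c :: nat \<Rightarrow> bool. bent n (gc k a c)"
proof
  fix c :: "nat \<Rightarrow> bool"
  obtain r where k: "k = Suc r" and "0 < r" using assms(2) by (cases k) auto
  interpret pow2_root_of_unity r using \<open>0 < r\<close> by unfold_locales
  obtain h where "n = 2 * h" using assms(1) by blast
  then have "2 powr (real n / 2) = 2 ^ h" by (simp add: powr_realpow)
  then show "bent n (gc k a c)"
    using assms(3) norm_wht_gc_eq unfolding bent_def gbent_def k by simp
qed

end
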